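(* Let $v\in[2,m-1]$, let $\hat{\mathcal{T}}$ be a triangulation of $C([m]_{v+},n)$ and let $\mathcal{T}=\hat{\mathcal{T}}[x\to v\leftarrow y]$. Then $\operatorname{simp}(\mathcal{T})=\{A\in\nu_{m,\lfloor n/2\rfloor}: A=\hat A[x\to v\leftarrow y]\text{ for some }\hat A\in\operatorname{simp}(\hat{\mathcal{T}})\}$.
   Context: $C(V,n)$ is the cyclic polytope on a finite ordered set $V$ (convex hull of $(t_v,\dots,t_v^n)$, $t_v$ increasing); $C(m,n)=C([m],n)$; a triangulation is a set of $(n+1)$-subsets whose geometric simplices form a simplicial complex covering $C(V,n)$, with simplices including all faces of members. For a triangulation $\mathcal{T}$ of $C(V,n)$, $\operatorname{simp}(\mathcal{T})$ is the set of $(\lfloor n/2\rfloor+1)$-subsets that are faces of simplices of $\mathcal{T}$ and are not contained in any facet of $C(V,n)$. $\nu_{m,d}$ is the set of $(d+1)$-subsets $B=(b_0<\dots<b_d)$ of $[m]$ with $b_{i+1}\geq b_i+2$ for all $i$ and $b_d\leqslant b_0+m-2$. $[m]_{v+}=\{1,\dots,v-1,x,y,v+1,\dots,m\}$ ordered with $v-1<x<y<v+1$. For $S\subseteq[m]_{v+}$, $S[x\to v\leftarrow y]=S$ if $S\cap\{x,y\}=\emptyset$ and $(S\setminus\{x,y\})\cup\{v\}$ otherwise; $\hat{\mathcal{T}}[x\to v\leftarrow y]=\{S[x\to v\leftarrow y]:S\in\hat{\mathcal{T}}\}\cap\binom{[m]}{n+1}$, a triangulation of $C(m,n)$. *)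

theory Defs
  imports "HOL-Analysis.Analysis"
begin

text \<open>Ambient space R^n is real^'n with n = CARD('n). The moment curve
  t |-> (t, t^2, ..., t^n) is realised up to a fixed permutation of coordinates,
  via a fixed bijection from the index type onto {1..n}.\<close>

definition coord_idx :: "'n::finite \<Rightarrow> nat" where
  "coord_idx = (SOME f. bij_betw f (UNIV::'n set) {1..CARD('n)})"

definition moment_pt :: "real \<Rightarrow> real ^ 'n::finite" where
  "moment_pt t = (\<chi> i. t ^ coord_idx i)"

text \<open>Vertex sets are finite sets of reals; the parameter of vertex v is v itself.\<close>

definition cyclic_polytope :: "'n::finite itself \<Rightarrow> real set \<Rightarrow> (real ^ 'n) set" where
  "cyclic_polytope _ V = convex hull (moment_pt ` V)"

definition gsimplex :: "'n::finite itself \<Rightarrow> real set \<Rightarrow> (real ^ 'n) set" where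
  "gsimplex _ S = convex hull (moment_pt ` S)"

definition is_triangulation :: "'n::finite itself \<Rightarrow> real set \<Rightarrow> real set set \<Rightarrow> bool" where
  "is_triangulation N V T \<longleftrightarrow>
     finite V \<and>
     (\<forall>S\<in>T. S \<subseteq> V \<and> card S = CARD('n) + 1) \<and>
     (\<Union>S\<in>T. gsimplex N S) = cyclic_polytope N V \<and>
     (\<forall>S\<in>T. \<forall>S'\<in>T. gsimplex N S \<inter> gsimplex N S' = gsimplex N (S \<inter> S'))"

definition simp_set :: "'n::finite itself \<Rightarrow> real set \<Rightarrow> real set set \<Rightarrow> real set set" where
  "simp_set N V T = {A. card A = CARD('n) div 2 + 1 \<and> (\<exists>S\<in>T. A \<subseteq> S) \<and>
      \<not> (\<exists>F. F facet_of cyclic_polytope N V \<and> (moment_pt ` A :: (real^'n) set) \<subseteq> F)}"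

definition nu :: "nat \<Rightarrow> nat \<Rightarrow> nat set set" where
  "nu m d = {B. B \<subseteq> {1..m} \<and> card B = d + 1 \<and>
      (\<forall>a\<in>B. \<forall>b\<in>B. a < b \<longrightarrow> a + 2 \<le> b) \<and>
      (\<forall>a\<in>B. \<forall>b\<in>B. b \<le> a + m - 2)}"

definition cyc_m :: "nat \<Rightarrow> real set" where
  "cyc_m m = real ` {1..m}"

text \<open>[m]_{v+}: replace v by two points x < y with v-1 < x < y < v+1.\<close>
definition cyc_m_plus :: "nat \<Rightarrow> nat \<Rightarrow> real \<Rightarrow> real \<Rightarrow> real set" where
  "cyc_m_plus m v x y = real ` ({1..m} - {v}) \<union> {x, y}"

definition collapse :: "real \<Rightarrow> real \<Rightarrow> nat \<Rightarrow> real set \<Rightarrow> real set" where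
  "collapse x y v S = (if S \<inter> {x, y} = {} then S else (S - {x, y}) \<union> {real v})"

definition collapse_tri :: "real \<Rightarrow> real \<Rightarrow> nat \<Rightarrow> nat \<Rightarrow> nat \<Rightarrow> real set set \<Rightarrow> real set set" where
  "collapse_tri x y v m n T = collapse x y v ` T \<inter> {S. S \<subseteq> real ` {1..m} \<and> card S = n + 1}"

end

theory Submission
  imports Defs "HOL-Computational_Algebra.Polynomial"
begin

text \<open>
  Affine functionals on \<open>\<real>\<^sup>n\<close> pulled back along the moment curve are exactly the
  polynomials of degree at most \<open>n\<close>. Hence a set \<open>A\<close> of vertices lies in a facet of
  \<open>C(V,n)\<close> iff some nonconstant polynomial of degree \<open>\<le> n\<close> is nonnegative on \<open>V\<close> and
  vanishes on \<open>A\<close>. For \<open>|A| = \<lfloor>n/2\<rfloor> + 1\<close> this happens iff \<open>A\<close> violates Gale's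
  evenness condition. If it fails, such a polynomial is a product of squared linear factors
  with one nonnegative factor of degree one or two vanishing at the offending points. If it
  holds, take the nodes \<open>A\<close>, the upper neighbours of the points of \<open>A\<close> and, for odd \<open>n\<close>,
  one point below \<open>A\<close>: the Lagrange weights at all nodes outside \<open>A\<close> are positive, so the
  vanishing top divided difference of the polynomial forces it to vanish at every node, hence
  identically. Thus \<open>simp(T)\<close> consists of the \<open>(\<lfloor>n/2\<rfloor>+1)\<close>-subsets of simplices
  of \<open>T\<close> satisfying Gale's condition.

  Collapsing \<open>x, y\<close> to \<open>v\<close> is monotone and injective on sets containing at most one of
  \<open>x, y\<close>, and it transports Gale's condition between \<open>[m]\<^sub>v\<^sub>+\<close> and \<open>[m]\<close> for the sets
  in question. The remaining point is that an interior face \<open>A\<^sub>+\<close> of \<open>T\<^sub>+\<close> lies in a simplex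
  avoiding any prescribed vertex \<open>w \<notin> A\<^sub>+\<close>: the barycentre of \<open>A\<^sub>+\<close> is in the relative
  interior of the polytope, and pushing it slightly away from \<open>w\<close> lands in a simplex that
  contains the barycentre, hence \<open>A\<^sub>+\<close>, but not \<open>w\<close>. Applied with \<open>w \<in> {x, y}\<close>, this yields a
  simplex of \<open>T\<^sub>+\<close> whose collapse is a simplex of \<open>T\<close>.
\<close>

section \<open>Facets of cyclic polytopes and nonnegative polynomials\<close>

lemma bij_betw_coord_idx: "bij_betw (coord_idx :: 'n::finite \<Rightarrow> nat) UNIV {1..CARD('n)}"
proof -
  have "\<exists>f. bij_betw f (UNIV::'n set) {1..CARD('n)}"
    by (rule finite_same_card_bij) auto
  then show ?thesis unfolding coord_idx_def by (rule someI_ex)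
qed

lemma coord_idx_in_range: "coord_idx (i::'n::finite) \<in> {1..CARD('n)}"
  using bij_betw_coord_idx bij_betwE by blast

definition moment_coeffs :: "real poly \<Rightarrow> real ^ 'n::finite" where
  "moment_coeffs f = (\<chi> i. coeff f (coord_idx i))"

definition poly_affine :: "real poly \<Rightarrow> real ^ 'n::finite \<Rightarrow> real" where
  "poly_affine f z = coeff f 0 + moment_coeffs f \<bullet> z"

lemma poly_affine_moment_pt:
  assumes "degree f \<le> CARD('n::finite)"
  shows "poly_affine f (moment_pt t :: real^'n) = poly f t"
proof -
  have "moment_coeffs f \<bullet> (moment_pt t :: real^'n) = (\<Sum>i\<in>UNIV. coeff f (coord_idx i) * t ^ coord_idx (i::'n))"
    by (simp add: inner_vec_def moment_coeffs_def moment_pt_def)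
  also have "\<dots> = (\<Sum>j\<in>{1..CARD('n)}. coeff f j * t ^ j)"
    using sum.reindex_bij_betw[OF bij_betw_coord_idx, of "\<lambda>j. coeff f j * t ^ j"] by simp
  also have "coeff f 0 + \<dots> = (\<Sum>j\<le>CARD('n). coeff f j * t ^ j)"
    by (simp add: atMost_atLeast0 sum.atLeast_Suc_atMost)
  also have "\<dots> = poly (\<Sum>j\<le>CARD('n). monom (coeff f j) j) t"
    by (simp add: poly_sum poly_monom)
  also have "\<dots> = poly f t"
    by (simp only: poly_as_sum_of_monoms'[OF assms])
  finally show ?thesis by (simp add: poly_affine_def)
qed

lemma poly_affine_nonneg_on_hull:
  assumes "degree f \<le> CARD('n::finite)" and "\<forall>t\<in>S. 0 \<le> poly f t"
    and "z \<in> convex hull (moment_pt ` S :: (real^'n) set)"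
  shows "0 \<le> poly_affine f z"
proof -
  have "{z. 0 \<le> poly_affine f z} = {z::real^'n. - coeff f 0 \<le> moment_coeffs f \<bullet> z}"
    by (auto simp: poly_affine_def)
  then have "convex {z::real^'n. 0 \<le> poly_affine f z}" by (simp add: convex_halfspace_ge)
  moreover have "moment_pt ` S \<subseteq> {z::real^'n. 0 \<le> poly_affine f z}"
    using assms(2) by (auto simp: poly_affine_moment_pt[OF assms(1)])
  ultimately show ?thesis using assms(3) hull_minimal by blast
qed

lemma poly_affine_zero_on_hull:
  assumes "degree f \<le> CARD('n::finite)" and "\<forall>t\<in>S. poly f t = 0"
    and "z \<in> convex hull (moment_pt ` S :: (real^'n) set)"
  shows "poly_affine f z = 0"
proof -
  have "{z. poly_affine f z = 0} = {z::real^'n. moment_coeffs f \<bullet> z = - coeff f 0}"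
    by (auto simp: poly_affine_def)
  then have "convex {z::real^'n. poly_affine f z = 0}" by (simp add: convex_hyperplane)
  moreover have "moment_pt ` S \<subseteq> {z::real^'n. poly_affine f z = 0}"
    using assms(2) by (auto simp: poly_affine_moment_pt[OF assms(1)])
  ultimately show ?thesis using assms(3) hull_minimal by blast
qed

definition halfspace_poly :: "real ^ 'n::finite \<Rightarrow> real \<Rightarrow> real poly" where
  "halfspace_poly a b = [:b:] - (\<Sum>i\<in>UNIV. monom (a $ i) (coord_idx i))"

lemma poly_halfspace_poly: "poly (halfspace_poly a b) t = b - a \<bullet> moment_pt t"
  by (simp add: halfspace_poly_def poly_sum poly_monom inner_vec_def moment_pt_def mult.commute)

lemma degree_halfspace_poly_le: "degree (halfspace_poly (a::real^'n::finite) b) \<le> CARD('n)"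
proof -
  have "degree (\<Sum>i\<in>UNIV. monom (a $ i) (coord_idx i)) \<le> CARD('n)"
    by (rule degree_sum_le)
      (use coord_idx_in_range in \<open>auto intro: order.trans[OF degree_monom_le]\<close>)
  then show ?thesis
    unfolding halfspace_poly_def using degree_diff_le[of "[:b:]" "CARD('n)"] by auto
qed

lemma degree_halfspace_poly_ge:
  assumes "(a::real^'n::finite) \<noteq> 0"
  shows "1 \<le> degree (halfspace_poly a b)"
proof -
  obtain i where ai: "a $ i \<noteq> 0" using assms by (metis vec_eq_iff zero_index)
  have inj: "inj (coord_idx :: 'n \<Rightarrow> nat)" using bij_betw_coord_idx bij_betw_def by blast
  have pos: "1 \<le> coord_idx i" using coord_idx_in_range by auto
  have "(\<Sum>j\<in>UNIV. coeff (monom (a $ j) (coord_idx j)) (coord_idx i)) = (\<Sum>j\<in>UNIV. if j = i then a $ j else 0)"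
    by (rule sum.cong) (auto dest: injD[OF inj])
  then have "coeff (halfspace_poly a b) (coord_idx i) = - a $ i"
    using pos by (simp add: halfspace_poly_def coeff_sum coeff_pCons split: nat.split)
  then have "coord_idx i \<le> degree (halfspace_poly a b)" using ai by (intro le_degree) simp
  then show ?thesis using pos by simp
qed

lemma moment_pt_in_cyclic_polytope: "t \<in> V \<Longrightarrow> moment_pt t \<in> cyclic_polytope N V"
  unfolding cyclic_polytope_def by (simp add: hull_inc)

lemma polyhedron_cyclic_polytope: "finite V \<Longrightarrow> polyhedron (cyclic_polytope N V)"
  unfolding cyclic_polytope_def by (simp add: polyhedron_convex_hull)

definition poly_supported :: "nat \<Rightarrow> real set \<Rightarrow> real set \<Rightarrow> bool" where
  "poly_supported n V A \<longleftrightarrow> (\<exists>q::real poly. 1 \<le> degree q \<and> degree q \<le> n \<and>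
      (\<forall>t\<in>V. 0 \<le> poly q t) \<and> (\<forall>t\<in>A. poly q t = 0))"

lemma poly_supported_if_in_facet:
  assumes fin: "finite V" and F: "F facet_of cyclic_polytope TYPE('n::finite) V"
    and AF: "(moment_pt ` A :: (real^'n) set) \<subseteq> F"
  shows "poly_supported CARD('n) V A"
proof -
  let ?P = "cyclic_polytope TYPE('n) V"
  obtain a b where ab: "a \<noteq> 0" "?P \<subseteq> {z. a \<bullet> z \<le> b}" "F = ?P \<inter> {z. a \<bullet> z = b}"
    using facet_of_polyhedron[OF polyhedron_cyclic_polytope[OF fin] F] by blast
  have "0 \<le> poly (halfspace_poly a b) t" if "t \<in> V" for t
    using that moment_pt_in_cyclic_polytope ab(2) by (fastforce simp: poly_halfspace_poly)
  moreover have "poly (halfspace_poly a b) t = 0" if "t \<in> A" for t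
    using that AF ab(3) by (auto simp: poly_halfspace_poly)
  ultimately show ?thesis
    unfolding poly_supported_def
    using degree_halfspace_poly_ge[OF ab(1)] degree_halfspace_poly_le
    by (intro exI[of _ "halfspace_poly a b"]) blast
qed

lemma in_facet_if_poly_supported:
  assumes fin: "finite V" and card: "CARD('n::finite) + 1 \<le> card V"
    and AV: "A \<subseteq> V" and ne: "A \<noteq> {}" and supp: "poly_supported CARD('n) V A"
  obtains F where "F facet_of cyclic_polytope TYPE('n) V" "(moment_pt ` A :: (real^'n) set) \<subseteq> F"
proof -
  let ?P = "cyclic_polytope TYPE('n) V"
  obtain q where q: "1 \<le> degree q" "degree q \<le> CARD('n)"
    "\<forall>t\<in>V. 0 \<le> poly q t" "\<forall>t\<in>A. poly q t = 0"
    using supp unfolding poly_supported_def by blast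
  define F0 where "F0 = ?P \<inter> {z. moment_coeffs q \<bullet> z = - coeff q 0}"
  have "z \<in> ?P \<Longrightarrow> - coeff q 0 \<le> moment_coeffs q \<bullet> z" for z
    using poly_affine_nonneg_on_hull[OF q(2,3)] by (fastforce simp: cyclic_polytope_def poly_affine_def)
  then have face: "F0 face_of ?P"
    unfolding F0_def
    by (intro face_of_Int_supporting_hyperplane_ge) (auto simp: cyclic_polytope_def)
  have on_F0: "moment_pt t \<in> F0 \<longleftrightarrow> poly q t = 0" if "t \<in> V" for t
    using that moment_pt_in_cyclic_polytope poly_affine_moment_pt[OF q(2), of t]
    by (auto simp: F0_def poly_affine_def)
  then have AF: "(moment_pt ` A :: (real^'n) set) \<subseteq> F0"
    using AV q(4) by auto
  have "F0 \<noteq> ?P"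
  proof
    assume "F0 = ?P"
    then have "V \<subseteq> {t. poly q t = 0}"
      using on_F0 moment_pt_in_cyclic_polytope by blast
    moreover have "q \<noteq> 0" using q(1) by auto
    ultimately have "card V \<le> degree q"
      using card_mono[OF poly_roots_finite] card_poly_roots_bound order.trans by blast
    then show False using q(2) card by linarith
  qed
  moreover have "F0 \<noteq> {}" using AF ne by auto
  ultimately obtain F where "F facet_of ?P" "F0 \<subseteq> F"
    using face_of_polyhedron_subset_facet[OF polyhedron_cyclic_polytope[OF fin] face] by blast
  then show ?thesis using AF that by blast
qed

lemma in_facet_iff_poly_supported:
  assumes "finite V" and "CARD('n::finite) + 1 \<le> card V" and "A \<subseteq> V" and "A \<noteq> {}"
  shows "(\<exists>F. F facet_of cyclic_polytope TYPE('n) V \<and> (moment_pt ` A :: (real^'n) set) \<subseteq> F)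
         \<longleftrightarrow> poly_supported CARD('n) V A"
  using poly_supported_if_in_facet[OF assms(1)] in_facet_if_poly_supported[OF assms] by metis

section \<open>Gale's evenness condition\<close>

definition vanishing_poly :: "real set \<Rightarrow> real poly" where
  "vanishing_poly R = (\<Prod>s\<in>R. [:-s, 1:])"

lemma poly_vanishing_poly: "poly (vanishing_poly R) t = (\<Prod>s\<in>R. t - s)"
  by (simp add: vanishing_poly_def poly_prod)

lemma poly_vanishing_poly_eq_0_iff: "finite R \<Longrightarrow> poly (vanishing_poly R) t = 0 \<longleftrightarrow> t \<in> R"
  by (simp add: poly_vanishing_poly prod_zero_iff)

lemma degree_vanishing_poly: "finite R \<Longrightarrow> degree (vanishing_poly R) = card R"
proof -
  have "degree (vanishing_poly R) = (\<Sum>s\<in>R. degree [:-s, 1::real:])"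
    unfolding vanishing_poly_def by (rule degree_prod_eq_sum_degree) auto
  then show ?thesis by simp
qed

lemma lead_coeff_vanishing_poly: "lead_coeff (vanishing_poly R) = 1"
  by (simp add: vanishing_poly_def lead_coeff_prod)

lemma vanishing_poly_nonzero: "vanishing_poly R \<noteq> 0"
  using lead_coeff_vanishing_poly[of R] by auto

lemma sum_divided_difference_eq_0:
  fixes T :: "real set" and q :: "real poly"
  assumes fin: "finite T" and deg: "degree q + 2 \<le> card T"
  shows "(\<Sum>t\<in>T. poly q t / (\<Prod>s\<in>T-{t}. t - s)) = 0"
proof -
  define c where "c t = poly q t / (\<Prod>s\<in>T-{t}. t - s)" for t
  \<comment> \<open>the Lagrange interpolant of \<open>q\<close> on \<open>T\<close>; the sum is its coefficient of degree \<open>|T| - 1\<close>\<close>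
  define P where "P = (\<Sum>t\<in>T. smult (c t) (vanishing_poly (T - {t})))"
  have lead_L: "coeff (vanishing_poly (T - {t})) (card T - 1) = 1" if "t \<in> T" for t
    using that fin lead_coeff_vanishing_poly[of "T - {t}"] by (simp add: degree_vanishing_poly)
  have interpolates: "poly P u = poly q u" if u: "u \<in> T" for u
  proof -
    have "poly P u = c u * poly (vanishing_poly (T - {u})) u
        + (\<Sum>t\<in>T-{u}. c t * poly (vanishing_poly (T - {t})) u)"
      using fin u by (simp add: P_def poly_sum sum.remove)
    also have "(\<Sum>t\<in>T-{u}. c t * poly (vanishing_poly (T - {t})) u) = 0"
      by (rule sum.neutral) (use fin u in \<open>auto simp: poly_vanishing_poly_eq_0_iff\<close>)
    also have "c u * poly (vanishing_poly (T - {u})) u = poly q u"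
      using fin by (simp add: c_def poly_vanishing_poly prod_zero_iff)
    finally show ?thesis by simp
  qed
  have "degree P \<le> card T - 1" unfolding P_def
    by (rule degree_sum_le)
      (use fin in \<open>auto intro: order.trans[OF degree_smult_le] simp: degree_vanishing_poly\<close>)
  then have "P = q"
    using interpolates deg by (intro poly_eqI_degree[of T]) auto
  moreover have "coeff q (card T - 1) = 0" using deg by (intro coeff_eq_0) simp
  moreover have "coeff P (card T - 1) = (\<Sum>t\<in>T. c t)"
    unfolding P_def coeff_sum coeff_smult
    by (rule sum.cong) (use lead_L in auto)
  ultimately show ?thesis by (simp add: c_def)
qed

lemma poly_eq_0_if_nonneg_at_positive_nodes:
  fixes T W :: "real set" and q :: "real poly"
  assumes fin: "finite T" and WT: "W \<subseteq> T" and deg: "degree q + 2 \<le> card T"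
    and zero: "\<forall>t\<in>T-W. poly q t = 0" and nonneg: "\<forall>w\<in>W. 0 \<le> poly q w"
    and pos: "\<forall>w\<in>W. 0 < (\<Prod>s\<in>T-{w}. w - s)"
  shows "q = 0"
proof -
  define c where "c t = poly q t / (\<Prod>s\<in>T-{t}. t - s)" for t
  have "(\<Sum>t\<in>W. c t) = (\<Sum>t\<in>T. c t)"
    by (rule sum.mono_neutral_left) (use fin WT zero in \<open>auto simp: c_def\<close>)
  also have "\<dots> = 0" using sum_divided_difference_eq_0[OF fin deg] by (simp add: c_def)
  finally have "(\<Sum>t\<in>W. c t) = 0" .
  moreover have "(\<Sum>t\<in>W. c t) = 0 \<longleftrightarrow> (\<forall>w\<in>W. c w = 0)"
    using nonneg pos finite_subset[OF WT fin]
    by (intro sum_nonneg_eq_0_iff) (auto simp: c_def divide_nonneg_pos)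
  ultimately have "\<forall>w\<in>W. c w = 0" by blast
  then have "\<forall>t\<in>T. poly q t = 0" using zero pos by (force simp: c_def)
  then show "q = 0" using deg by (intro poly_eqI_degree[of T q 0]) auto
qed

lemma prod_Un_image:
  assumes "finite A" and "inj_on f A" and "A \<inter> f ` A = {}"
  shows "(\<Prod>s\<in>A \<union> f ` A. g s) = (\<Prod>a\<in>A. g a * g (f a))"
  using assms by (simp add: prod.union_disjoint prod.reindex prod.distrib)

definition separated_in :: "real set \<Rightarrow> real set \<Rightarrow> bool" where
  "separated_in V A \<longleftrightarrow> (\<forall>a\<in>A. \<forall>b\<in>A. a < b \<longrightarrow> (\<exists>s\<in>V. a < s \<and> s < b))"

lemma upper_neighbour_map:
  assumes fin: "finite V" and AV: "A \<subseteq> V" and sep: "separated_in V A" and max: "Max V \<notin> A"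
  obtains f where "inj_on f A" "\<forall>a\<in>A. f a \<in> V - A \<and> a < f a"
    "\<forall>a\<in>A. \<forall>s\<in>V. s \<le> a \<or> f a \<le> s"
proof -
  define f where "f a = Min {s\<in>V. a < s}" for a
  have f: "f a \<in> V" "a < f a" "\<forall>s\<in>V. s \<le> a \<or> f a \<le> s" if "a \<in> A" for a
  proof -
    have "a < Max V" using that AV max fin by (metis Max_ge le_neq_trans subsetD)
    then have "{s\<in>V. a < s} \<noteq> {}" using fin AV that Max_in by fastforce
    then show "f a \<in> V" "a < f a"
      using Min_in[of "{s\<in>V. a < s}"] fin by (auto simp: f_def)
    show "\<forall>s\<in>V. s \<le> a \<or> f a \<le> s"
      using fin by (auto simp: f_def not_le intro: Min_le)
  qed
  have "f a \<notin> A" if "a \<in> A" for a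
    using sep f[OF that] that unfolding separated_in_def by force
  moreover have "inj_on f A"
  proof (rule inj_onI, rule ccontr)
    fix a b assume ab: "a \<in> A" "b \<in> A" "f a = f b" "a \<noteq> b"
    then have "f a \<le> b \<or> f b \<le> a" using f AV by (metis linorder_neqE subsetD not_le)
    then show False using ab f by force
  qed
  ultimately show ?thesis using that f by blast
qed

lemma prod_neighbour_pairs_pos:
  fixes w :: real
  assumes "\<forall>a\<in>A. a < f a \<and> w \<noteq> a \<and> w \<noteq> f a \<and> (w \<le> a \<or> f a \<le> w)"
  shows "0 < (\<Prod>a\<in>A. (w - a) * (w - f a))"
proof (rule prod_pos)
  fix a assume "a \<in> A"
  then have "w < a \<and> w < f a \<or> a < w \<and> f a < w" using assms by force
  then show "0 < (w - a) * (w - f a)" by (auto intro: mult_pos_pos mult_neg_neg)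
qed

lemma lagrange_denominator_pos_below:
  fixes e :: real
  assumes finA: "finite A" and inj: "inj_on f A"
    and nb: "\<forall>a\<in>A. f a \<notin> A \<and> a < f a" and below: "\<forall>a\<in>A. e < a"
  shows "0 < (\<Prod>s\<in>A \<union> f ` A. e - s)"
proof -
  have "0 < (\<Prod>a\<in>A. (e - a) * (e - f a))"
    using below nb by (intro prod_neighbour_pairs_pos) force
  moreover have "A \<inter> f ` A = {}" using nb by auto
  ultimately show ?thesis by (simp add: prod_Un_image[OF finA inj])
qed

lemma lagrange_denominator_pos_neighbour:
  fixes A E :: "real set"
  assumes finA: "finite A" and finE: "finite E" and inj: "inj_on f A"
    and nb: "\<forall>a\<in>A. f a \<notin> A \<and> a < f a" and adj: "\<forall>a\<in>A. \<forall>b\<in>A. f b \<le> a \<or> f a \<le> f b"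
    and below: "\<forall>e\<in>E. \<forall>a\<in>A. e < a" and a0: "a0 \<in> A"
  shows "0 < (\<Prod>s\<in>(A \<union> f ` A \<union> E) - {f a0}. f a0 - s)"
proof -
  have E_below: "e < a" "e < f a" if "e \<in> E" "a \<in> A" for e a
    using below nb that by force+
  have AfE: "(A \<union> f ` A) \<inter> E = {}" using E_below by force
  define A' where "A' = A - {a0}"
  have inj': "inj_on f A'" and disj': "A' \<inter> f ` A' = {}" and finA': "finite A'"
    using inj nb finA by (auto simp: A'_def inj_on_diff)
  have "A \<union> f ` A \<union> E = insert (f a0) (insert a0 ((A' \<union> f ` A') \<union> E))"
    using a0 by (auto simp: A'_def)
  moreover have "f a0 \<notin> insert a0 ((A' \<union> f ` A') \<union> E)"
    using a0 nb AfE inj by (auto simp: A'_def inj_on_def)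
  ultimately have "(A \<union> f ` A \<union> E) - {f a0} = insert a0 ((A' \<union> f ` A') \<union> E)" by auto
  moreover have "a0 \<notin> (A' \<union> f ` A') \<union> E" and "(A' \<union> f ` A') \<inter> E = {}"
    using a0 nb AfE by (auto simp: A'_def)
  ultimately have "(\<Prod>s\<in>(A \<union> f ` A \<union> E) - {f a0}. f a0 - s)
      = (f a0 - a0) * ((\<Prod>a\<in>A'. (f a0 - a) * (f a0 - f a)) * (\<Prod>e\<in>E. f a0 - e))"
    using finA' finE by (simp add: prod.union_disjoint prod_Un_image[OF finA' inj' disj'])
  moreover have "0 < (\<Prod>a\<in>A'. (f a0 - a) * (f a0 - f a))"
    using a0 adj nb inj by (intro prod_neighbour_pairs_pos) (auto simp: A'_def inj_on_def)
  moreover have "0 < (\<Prod>e\<in>E. f a0 - e)"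
    using E_below a0 by (intro prod_pos) auto
  ultimately show ?thesis using a0 nb by simp
qed

lemma poly_eq_0_if_vanishes_with_upper_neighbours:
  fixes q :: "real poly"
  assumes fin: "finite V" and AV: "A \<subseteq> V" and inj: "inj_on f A"
    and nb: "\<forall>a\<in>A. f a \<in> V - A \<and> a < f a" and adj: "\<forall>a\<in>A. \<forall>s\<in>V. s \<le> a \<or> f a \<le> s"
    and EV: "E \<subseteq> V" and E1: "card E \<le> 1" and below: "\<forall>e\<in>E. \<forall>a\<in>A. e < a"
    and deg: "degree q + 2 \<le> 2 * card A + card E"
    and nonneg: "\<forall>t\<in>V. 0 \<le> poly q t" and zero: "\<forall>t\<in>A. poly q t = 0"
  shows "q = 0"
proof -
  have finA: "finite A" and finE: "finite E" using fin AV EV finite_subset by blast+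
  have disj: "A \<inter> f ` A = {}" using nb by auto
  have E_below: "e < a" "e < f a" if "e \<in> E" "a \<in> A" for e a
    using below nb that by force+
  have AfE: "(A \<union> f ` A) \<inter> E = {}" using E_below by force
  have "card (A \<union> f ` A) = 2 * card A"
    using finA disj inj by (simp add: card_Un_disjoint card_image)
  then have "card (A \<union> f ` A \<union> E) = 2 * card A + card E"
    using finA finE AfE by (simp add: card_Un_disjoint)
  moreover have "0 < (\<Prod>s\<in>(A \<union> f ` A \<union> E) - {w}. w - s)" if w: "w \<in> f ` A \<union> E" for w
  proof (cases "w \<in> E")
    case True
    then have "E = {w}" using E1 card_le_Suc0_iff_eq[OF finE] by auto
    then have "(A \<union> f ` A \<union> E) - {w} = A \<union> f ` A" using AfE by auto
    then show ?thesis
      using lagrange_denominator_pos_below[OF finA inj] nb below True by simp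
  next
    case False
    then obtain a0 where "a0 \<in> A" "w = f a0" using w by blast
    moreover have "\<forall>a\<in>A. \<forall>b\<in>A. f b \<le> a \<or> f a \<le> f b" using adj nb by blast
    ultimately show ?thesis
      using lagrange_denominator_pos_neighbour[OF finA finE inj _ _ below] nb by simp
  qed
  ultimately show "q = 0"
    using deg nonneg zero nb EV finA finE
    by (intro poly_eq_0_if_nonneg_at_positive_nodes[of "A \<union> f ` A \<union> E" "f ` A \<union> E"]) auto
qed

lemma not_poly_supported_if_max_notin:
  assumes fin: "finite V" and AV: "A \<subseteq> V" and sep: "separated_in V A"
    and card: "card A = n div 2 + 1" and max: "Max V \<notin> A" and min: "odd n \<longrightarrow> Min V \<notin> A"
  shows "\<not> poly_supported n V A"
proof
  assume "poly_supported n V A"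
  then obtain q where q: "1 \<le> degree q" "degree q \<le> n" "\<forall>t\<in>V. 0 \<le> poly q t" "\<forall>t\<in>A. poly q t = 0"
    unfolding poly_supported_def by blast
  obtain f where f: "inj_on f A" "\<forall>a\<in>A. f a \<in> V - A \<and> a < f a" "\<forall>a\<in>A. \<forall>s\<in>V. s \<le> a \<or> f a \<le> s"
    using upper_neighbour_map[OF fin AV sep max] by blast
  have "V \<noteq> {}" using AV card by auto
  \<comment> \<open>for odd \<open>n\<close> one more node is needed: \<open>Min V\<close> lies below \<open>A\<close> and its neighbours\<close>
  define E where "E = (if odd n then {Min V} else {})"
  have "E \<subseteq> V" using Min_in[OF fin \<open>V \<noteq> {}\<close>] by (simp add: E_def)
  moreover have "\<forall>e\<in>E. \<forall>a\<in>A. e < a"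
    using min AV fin by (auto simp: E_def order.strict_iff_order)
  moreover have "degree q + 2 \<le> 2 * card A + card E"
    using q(2) card by (auto simp: E_def)
  ultimately have "q = 0"
    using poly_eq_0_if_vanishes_with_upper_neighbours[OF fin AV f] q(3,4) by (simp add: E_def)
  then show False using q(1) by simp
qed

lemma poly_supported_reflect:
  assumes "poly_supported n V A"
  shows "poly_supported n (uminus ` V) (uminus ` A)"
proof -
  obtain q where q: "1 \<le> degree q" "degree q \<le> n" "\<forall>t\<in>V. 0 \<le> poly q t" "\<forall>t\<in>A. poly q t = 0"
    using assms unfolding poly_supported_def by blast
  have "degree (q \<circ>\<^sub>p [:0, -1:]) = degree q" by (simp add: degree_pcompose)
  moreover have "poly (q \<circ>\<^sub>p [:0, -1:]) (- t) = poly q t" for t by (simp add: poly_pcompose)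
  ultimately show ?thesis
    unfolding poly_supported_def using q by (intro exI[of _ "q \<circ>\<^sub>p [:0, -1:]"]) auto
qed

lemma separated_in_reflect: "separated_in V A \<Longrightarrow> separated_in (uminus ` V) (uminus ` A)"
  unfolding separated_in_def by (fastforce intro: bexI[of _ "- s" for s])

definition gale_interior :: "nat \<Rightarrow> real set \<Rightarrow> real set \<Rightarrow> bool" where
  "gale_interior n V A \<longleftrightarrow> separated_in V A \<and> \<not> (Min V \<in> A \<and> Max V \<in> A) \<and>
     (odd n \<longrightarrow> Min V \<notin> A \<and> Max V \<notin> A)"

lemma not_poly_supported_if_gale_interior:
  assumes fin: "finite V" and AV: "A \<subseteq> V" and card: "card A = n div 2 + 1"
    and gale: "gale_interior n V A"
  shows "\<not> poly_supported n V A"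
proof (cases "Max V \<in> A")
  case False
  then show ?thesis
    using gale not_poly_supported_if_max_notin[OF fin AV _ card] by (simp add: gale_interior_def)
next
  case True
  have "V \<noteq> {}" using AV True by auto
  then have "Max (uminus ` V) \<notin> uminus ` A" and "even n"
    using gale True fin by (auto simp flip: minus_Min_eq_Max simp: gale_interior_def)
  moreover have "card (uminus ` A) = n div 2 + 1" using card by (simp add: card_image)
  moreover have "separated_in (uminus ` V) (uminus ` A)"
    using gale separated_in_reflect by (simp add: gale_interior_def)
  ultimately have "\<not> poly_supported n (uminus ` V) (uminus ` A)"
    using fin AV by (intro not_poly_supported_if_max_notin) auto
  then show ?thesis using poly_supported_reflect by blast
qed

lemma poly_supported_if_roots:
  fixes r :: "real poly"
  assumes finA: "finite A" and r: "1 \<le> degree r"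
    and r_nonneg: "\<forall>t\<in>V. 0 \<le> poly r t" and r_zero: "\<forall>t\<in>B. poly r t = 0"
    and deg: "2 * card (A - B) + degree r \<le> n"
  shows "poly_supported n V A"
proof -
  define Q where "Q = vanishing_poly (A - B) ^ 2"
  have finAB: "finite (A - B)" using finA by simp
  have "r \<noteq> 0" using r by auto
  moreover have "Q \<noteq> 0" by (simp add: Q_def vanishing_poly_nonzero)
  ultimately have "degree (Q * r) = 2 * card (A - B) + degree r"
    by (simp add: degree_mult_eq Q_def degree_power_eq degree_vanishing_poly[OF finAB])
  then show ?thesis
    unfolding poly_supported_def using r r_nonneg r_zero deg
    by (intro exI[of _ "Q * r"]) (auto simp: Q_def poly_vanishing_poly_eq_0_iff[OF finAB])
qed

lemma poly_supported_if_two_roots: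
  fixes r :: "real poly"
  assumes finA: "finite A" and ab: "a \<in> A" "b \<in> A" "a \<noteq> b" and deg: "degree r = 2"
    and nonneg: "\<forall>t\<in>V. 0 \<le> poly r t" and roots: "poly r a = 0" "poly r b = 0"
    and card: "2 * card A \<le> n + 2"
  shows "poly_supported n V A"
proof (rule poly_supported_if_roots[OF finA _ nonneg])
  have "card (A - {a, b}) = card A - 2" using ab finA by (simp add: card_Diff_subset)
  moreover have "2 \<le> card A" using card_mono[OF finA, of "{a, b}"] ab by simp
  ultimately show "2 * card (A - {a, b}) + degree r \<le> n" using card deg by simp
qed (use ab deg roots in auto)

lemma poly_supported_if_one_root:
  fixes r :: "real poly"
  assumes finA: "finite A" and a: "a \<in> A" and deg: "degree r = 1"
    and nonneg: "\<forall>t\<in>V. 0 \<le> poly r t" and root: "poly r a = 0" and card: "2 * card A \<le> n + 1"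
  shows "poly_supported n V A"
proof (rule poly_supported_if_roots[OF finA _ nonneg, of "{a}"])
  have "0 < card A" using a finA card_gt_0_iff by blast
  then show "2 * card (A - {a}) + degree r \<le> n" using a deg card by simp
qed (use a deg root in auto)

lemma poly_supported_if_not_gale_interior:
  assumes fin: "finite V" and lt: "Min V < Max V" and AV: "A \<subseteq> V"
    and card: "card A = n div 2 + 1" and not_gale: "\<not> gale_interior n V A"
  shows "poly_supported n V A"
proof -
  have finA: "finite A" using fin AV finite_subset by blast
  have V_bounds: "Min V \<le> t" "t \<le> Max V" if "t \<in> V" for t using fin that by auto
  have card2: "2 * card A \<le> n + 2" and card1: "odd n \<Longrightarrow> 2 * card A \<le> n + 1"
    using card by (auto elim: oddE)
  consider (adjacent) a b where "a \<in> A" "b \<in> A" "a < b" "\<forall>s\<in>V. s \<le> a \<or> b \<le> s"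
    | (ends) "Min V \<in> A" "Max V \<in> A"
    | (odd_min) "odd n" "Min V \<in> A"
    | (odd_max) "odd n" "Max V \<in> A"
    using not_gale unfolding gale_interior_def separated_in_def by (meson not_le)
  then show ?thesis
  proof cases
    case adjacent
    have "0 \<le> (t - a) * (t - b)" if "t \<in> V" for t
      using adjacent that by (force simp: zero_le_mult_iff)
    then show ?thesis
      using adjacent card2
      by (intro poly_supported_if_two_roots[OF finA, of a b "[:-a, 1:] * [:-b, 1:]"])
        (auto simp: degree_mult_eq algebra_simps)
  next
    case ends
    have "0 \<le> (t - Min V) * (Max V - t)" if "t \<in> V" for t
      using V_bounds[OF that] by simp
    then show ?thesis
      using ends lt card2
      by (intro poly_supported_if_two_roots[OF finA, of "Min V" "Max V" "[:-Min V, 1:] * [:Max V, -1:]"])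
        (auto simp: degree_mult_eq algebra_simps)
  next
    case odd_min
    then show ?thesis
      using V_bounds card1 by (intro poly_supported_if_one_root[OF finA, of "Min V" "[:-Min V, 1:]"]) auto
  next
    case odd_max
    then show ?thesis
      using V_bounds card1 by (intro poly_supported_if_one_root[OF finA, of "Max V" "[:Max V, -1:]"]) auto
  qed
qed

lemma Min_less_Max_if_two_le_card:
  fixes V :: "'a::linorder set"
  assumes fin: "finite V" and card: "2 \<le> card V"
  shows "Min V < Max V"
proof (rule ccontr)
  assume le: "\<not> Min V < Max V"
  have "t = Min V" if "t \<in> V" for t
    using Min_le[OF fin that] Max_ge[OF fin that] le by (meson order.trans order.antisym not_less)
  then have "V \<subseteq> {Min V}" by blast
  then show False using card_mono[of "{Min V}" V] card by simp
qed

lemma not_in_facet_iff_gale_interior: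
  assumes fin: "finite V" and cardV: "CARD('n::finite) + 1 \<le> card V"
    and AV: "A \<subseteq> V" and cardA: "card A = CARD('n) div 2 + 1"
  shows "\<not> (\<exists>F. F facet_of cyclic_polytope TYPE('n) V \<and> (moment_pt ` A :: (real^'n) set) \<subseteq> F)
         \<longleftrightarrow> gale_interior CARD('n) V A"
proof -
  have "Min V < Max V"
    using cardV zero_less_card_finite[where 'a='n] by (intro Min_less_Max_if_two_le_card[OF fin]) linarith
  moreover have "A \<noteq> {}" using cardA by auto
  ultimately show ?thesis
    using in_facet_iff_poly_supported[OF fin cardV AV] not_poly_supported_if_gale_interior[OF fin AV cardA]
      poly_supported_if_not_gale_interior[OF fin _ AV cardA] by blast
qed

lemma mem_simp_set_iff:
  fixes T :: "real set set"
  assumes fin: "finite V" and T: "\<forall>S\<in>T. S \<subseteq> V \<and> card S = CARD('n::finite) + 1"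
  shows "A \<in> simp_set TYPE('n) V T \<longleftrightarrow>
    (\<exists>S\<in>T. A \<subseteq> S) \<and> card A = CARD('n) div 2 + 1 \<and> gale_interior CARD('n) V A"
proof -
  have "\<not> (\<exists>F. F facet_of cyclic_polytope TYPE('n) V \<and> (moment_pt ` A :: (real^'n) set) \<subseteq> F)
         \<longleftrightarrow> gale_interior CARD('n) V A"
    if "S \<in> T" "A \<subseteq> S" "card A = CARD('n) div 2 + 1" for S
  proof (rule not_in_facet_iff_gale_interior[OF fin])
    show "CARD('n) + 1 \<le> card V" using T that(1) card_mono[OF fin] by metis
  qed (use T that in auto)
  then show ?thesis unfolding simp_set_def by blast
qed

section \<open>Interior faces of triangulations\<close>

definition moment_barycenter :: "real set \<Rightarrow> real ^ 'n::finite" where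
  "moment_barycenter A = (1 / real (card A)) *\<^sub>R (\<Sum>t\<in>A. moment_pt t)"

lemma moment_barycenter_in_hull:
  assumes "finite A" and "A \<noteq> {}"
  shows "moment_barycenter A \<in> convex hull (moment_pt ` A)"
proof -
  have "moment_barycenter A = (\<Sum>t\<in>A. (1 / real (card A)) *\<^sub>R moment_pt t)"
    by (simp add: moment_barycenter_def scaleR_sum_right)
  also have "\<dots> \<in> convex hull (moment_pt ` A)"
    by (rule convex_sum) (use assms in \<open>auto simp: hull_inc\<close>)
  finally show ?thesis .
qed

lemma poly_affine_moment_barycenter:
  assumes "finite A" and "A \<noteq> {}" and "degree f \<le> CARD('n::finite)"
  shows "poly_affine f (moment_barycenter A :: real^'n) = (\<Sum>t\<in>A. poly f t) / real (card A)"
proof -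
  have "(\<Sum>t\<in>A. poly f t) = (\<Sum>t\<in>A. coeff f 0 + moment_coeffs f \<bullet> (moment_pt t :: real^'n))"
    using poly_affine_moment_pt[OF assms(3)] by (simp add: poly_affine_def)
  also have "\<dots> = real (card A) * coeff f 0 + moment_coeffs f \<bullet> (\<Sum>t\<in>A. moment_pt t :: real^'n)"
    by (simp add: sum.distrib inner_sum_right)
  finally show ?thesis
    using assms(1,2) by (simp add: poly_affine_def moment_barycenter_def field_simps)
qed

lemma moment_barycenter_in_rel_interior:
  assumes fin: "finite V" and AV: "A \<subseteq> V" and ne: "A \<noteq> {}"
    and nf: "\<not> (\<exists>F. F facet_of cyclic_polytope TYPE('n::finite) V \<and> (moment_pt ` A :: (real^'n) set) \<subseteq> F)"
  shows "(moment_barycenter A :: real^'n) \<in> rel_interior (cyclic_polytope TYPE('n) V)"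
proof -
  let ?P = "cyclic_polytope TYPE('n) V" and ?p = "moment_barycenter A :: real^'n"
  have finA: "finite A" using fin AV finite_subset by blast
  have "?p \<in> ?P"
    using moment_barycenter_in_hull[OF finA ne] AV
    unfolding cyclic_polytope_def by (meson hull_mono image_mono subsetD)
  moreover have "?p \<notin> F" if F: "F facet_of ?P" for F
  proof
    assume "?p \<in> F"
    obtain a b where ab: "?P \<subseteq> {z. a \<bullet> z \<le> b}" "F = ?P \<inter> {z. a \<bullet> z = b}"
      using facet_of_polyhedron[OF polyhedron_cyclic_polytope[OF fin] F] by blast
    have mP: "moment_pt t \<in> ?P" if "t \<in> A" for t
      using that AV by (intro moment_pt_in_cyclic_polytope) auto
    have gap_nonneg: "\<forall>t\<in>A. 0 \<le> b - a \<bullet> moment_pt t"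
      using ab(1) mP by auto
    have "b = a \<bullet> ?p" using \<open>?p \<in> F\<close> ab(2) by simp
    also have "\<dots> = (\<Sum>t\<in>A. a \<bullet> moment_pt t) / real (card A)"
      by (simp add: moment_barycenter_def inner_sum_right)
    finally have "(\<Sum>t\<in>A. b - a \<bullet> moment_pt t) = 0"
      using finA ne by (simp add: sum_subtractf field_simps)
    then have "\<forall>t\<in>A. b - a \<bullet> moment_pt t = 0"
      using sum_nonneg_eq_0_iff[OF finA, of "\<lambda>t. b - a \<bullet> moment_pt t"] gap_nonneg by simp
    then have "(moment_pt ` A :: (real^'n) set) \<subseteq> F"
      using ab(2) mP by auto
    then show False using nf F by blast
  qed
  ultimately show ?thesis
    using rel_interior_of_polyhedron[OF polyhedron_cyclic_polytope[OF fin]] by blast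
qed

lemma push_away_within_member:
  fixes p d :: "'a::euclidean_space" and \<K> :: "'a set set"
  assumes p: "p \<in> rel_interior P" and d: "d \<in> P" and fin: "finite \<K>"
    and closed: "\<forall>K\<in>\<K>. closed K" and cover: "P \<subseteq> \<Union>\<K>"
  obtains \<epsilon> K where "0 < \<epsilon>" "K \<in> \<K>" "p \<in> K" "p + \<epsilon> *\<^sub>R (p - d) \<in> K"
proof -
  define g where "g \<epsilon> = p + \<epsilon> *\<^sub>R (p - d)" for \<epsilon> :: real
  have g: "(g \<longlongrightarrow> p) (at_right 0)" unfolding g_def by (auto intro!: tendsto_eq_intros)
  obtain U where U: "open U" "p \<in> U" "U \<inter> affine hull P \<subseteq> P"
    using p by (auto simp: mem_rel_interior)
  have aff: "g \<epsilon> \<in> affine hull P" for \<epsilon>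
  proof -
    have "g \<epsilon> = (1 + \<epsilon>) *\<^sub>R p + (- \<epsilon>) *\<^sub>R d" by (simp add: g_def algebra_simps)
    then show ?thesis
      using p d mem_affine[OF affine_affine_hull, of p P d "1 + \<epsilon>" "- \<epsilon>"]
      by (simp add: hull_inc rel_interior_subset[THEN subsetD])
  qed
  have "\<forall>\<^sub>F \<epsilon> in at_right 0. g \<epsilon> \<in> P"
    by (rule eventually_mono[OF topological_tendstoD[OF g U(1,2)]]) (use U(3) aff in blast)
  moreover have "\<forall>\<^sub>F \<epsilon> in at_right 0. \<forall>K\<in>{K\<in>\<K>. p \<notin> K}. g \<epsilon> \<in> - K"
    using fin closed by (intro eventually_ball_finite ballI topological_tendstoD[OF g]) auto
  ultimately have "\<forall>\<^sub>F \<epsilon> in at_right 0. 0 < \<epsilon> \<and> g \<epsilon> \<in> P \<and> (\<forall>K\<in>\<K>. g \<epsilon> \<in> K \<longrightarrow> p \<in> K)"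
    using eventually_at_right_less[of 0] by eventually_elim auto
  then obtain \<epsilon> where "0 < \<epsilon>" "g \<epsilon> \<in> P" "\<forall>K\<in>\<K>. g \<epsilon> \<in> K \<longrightarrow> p \<in> K"
    using eventually_happens'[OF trivial_limit_at_right_real] by blast
  with cover that show ?thesis by (auto simp: g_def)
qed

lemma subset_if_moment_barycenter_in_hull:
  assumes finR: "finite R" and cardR: "card R \<le> CARD('n::finite) + 1"
    and AR: "A \<subseteq> R" and ne: "A \<noteq> {}" and R'R: "R' \<subseteq> R"
    and hull: "(moment_barycenter A :: real^'n) \<in> convex hull (moment_pt ` R')"
  shows "A \<subseteq> R'"
proof
  fix a assume a: "a \<in> A"
  show "a \<in> R'"
  proof (rule ccontr)
    assume "a \<notin> R'"
    define f where "f = vanishing_poly (R - {a})"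
    have finA: "finite A" using finR AR finite_subset by blast
    have "a \<in> R" using a AR by blast
    then have deg: "degree f \<le> CARD('n)"
      using finR cardR by (simp add: f_def degree_vanishing_poly)
    have "poly_affine f (moment_barycenter A :: real^'n) = 0"
      using \<open>a \<notin> R'\<close> R'R finR
      by (intro poly_affine_zero_on_hull[OF deg _ hull]) (auto simp: f_def poly_vanishing_poly_eq_0_iff)
    moreover have "(\<Sum>t\<in>A-{a}. poly f t) = 0"
      using finR AR by (intro sum.neutral) (auto simp: f_def poly_vanishing_poly_eq_0_iff)
    then have "(\<Sum>t\<in>A. poly f t) = poly f a" using finA a by (simp add: sum.remove)
    moreover have "poly f a \<noteq> 0" using finR by (simp add: f_def poly_vanishing_poly_eq_0_iff)
    ultimately show False using poly_affine_moment_barycenter[OF finA ne deg] finA ne by simp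
  qed
qed

lemma pushed_moment_barycenter_notin_hull:
  assumes finS: "finite S" and cardS: "card S \<le> CARD('n::finite) + 1"
    and w: "w \<in> S" and AS: "A \<subseteq> S - {w}" and ne: "A \<noteq> {}" and pos: "0 < \<epsilon>"
  defines "p \<equiv> moment_barycenter A :: real^'n"
  shows "p + \<epsilon> *\<^sub>R (p - moment_pt w) \<notin> convex hull (moment_pt ` S)"
proof
  assume hull: "p + \<epsilon> *\<^sub>R (p - moment_pt w) \<in> convex hull (moment_pt ` S)"
  define f where "f = vanishing_poly (S - {w})"
  \<comment> \<open>\<open>g\<close> is nonnegative on the simplex, vanishes at \<open>p\<close> and is positive at \<open>w\<close>\<close>
  define g where "g = smult (poly f w) f"
  have finA: "finite A" using finS AS finite_subset by blast
  have f_zero: "poly f t = 0 \<longleftrightarrow> t \<in> S - {w}" for t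
    using finS by (simp add: f_def poly_vanishing_poly_eq_0_iff)
  have "degree f \<le> CARD('n)"
    using finS w cardS by (simp add: f_def degree_vanishing_poly)
  then have deg: "degree g \<le> CARD('n)" unfolding g_def by (rule order.trans[OF degree_smult_le])
  have "0 \<le> poly g t" if "t \<in> S" for t
  proof (cases "t = w")
    case False
    then have "poly f t = 0" using f_zero that by blast
    then show ?thesis by (simp add: g_def)
  qed (simp add: g_def)
  then have "0 \<le> poly_affine g (p + \<epsilon> *\<^sub>R (p - moment_pt w))"
    using poly_affine_nonneg_on_hull[OF deg _ hull] by simp
  also have "poly_affine g (p + \<epsilon> *\<^sub>R (p - moment_pt w))
      = (1 + \<epsilon>) * poly_affine g p - \<epsilon> * poly_affine g (moment_pt w :: real^'n)"
    by (simp add: poly_affine_def inner_add_right inner_diff_right algebra_simps)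
  also have "poly_affine g p = 0"
  proof -
    have "(\<Sum>t\<in>A. poly g t) = 0" using f_zero AS by (intro sum.neutral) (auto simp: g_def)
    then show ?thesis using poly_affine_moment_barycenter[OF finA ne deg] by (simp add: p_def)
  qed
  also have "poly_affine g (moment_pt w :: real^'n) = (poly f w)\<^sup>2"
    using poly_affine_moment_pt[OF deg] by (simp add: g_def power2_eq_square)
  finally show False using pos f_zero[of w] by (simp add: mult_le_0_iff)
qed

lemma finite_triangulation:
  assumes "is_triangulation N V T"
  shows "finite T" and "S \<in> T \<Longrightarrow> finite S"
proof -
  have "finite V" and T: "\<forall>S\<in>T. S \<subseteq> V"
    using assms unfolding is_triangulation_def by auto
  then show "finite T" by (meson Pow_iff finite_Pow_iff finite_subset subsetI)
  show "S \<in> T \<Longrightarrow> finite S" using T \<open>finite V\<close> finite_subset by blast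
qed

lemma triangulation_avoids_vertex:
  fixes T :: "real set set"
  assumes tri: "is_triangulation TYPE('n::finite) V T" and S0: "S0 \<in> T" and AS0: "A \<subseteq> S0"
    and ne: "A \<noteq> {}"
    and nf: "\<not> (\<exists>F. F facet_of cyclic_polytope TYPE('n) V \<and> (moment_pt ` A :: (real^'n) set) \<subseteq> F)"
    and w: "w \<in> V" "w \<notin> A"
  shows "\<exists>S\<in>T. A \<subseteq> S \<and> w \<notin> S"
proof -
  let ?p = "moment_barycenter A :: real^'n" and ?simplex = "gsimplex TYPE('n)"
  have finV: "finite V" and T: "\<forall>S\<in>T. S \<subseteq> V \<and> card S = CARD('n) + 1"
    and cover: "(\<Union>S\<in>T. ?simplex S) = cyclic_polytope TYPE('n) V"
    and inter: "\<forall>S\<in>T. \<forall>S'\<in>T. ?simplex S \<inter> ?simplex S' = ?simplex (S \<inter> S')"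
    using tri unfolding is_triangulation_def by auto
  note finS = finite_triangulation(2)[OF tri]
  have fin_simplices: "finite (?simplex ` T)" using finite_triangulation(1)[OF tri] by simp
  have closed: "\<forall>K\<in>?simplex ` T. closed K"
    using finS by (auto simp: gsimplex_def intro: compact_imp_closed finite_imp_compact_convex_hull)
  have p: "?p \<in> rel_interior (cyclic_polytope TYPE('n) V)"
    using AS0 T S0 by (intro moment_barycenter_in_rel_interior[OF finV _ ne nf]) auto
  have d: "moment_pt w \<in> cyclic_polytope TYPE('n) V" by (rule moment_pt_in_cyclic_polytope[OF w(1)])
  have "cyclic_polytope TYPE('n) V \<subseteq> \<Union>(?simplex ` T)" using cover by simp
  then obtain \<epsilon> K where eps: "0 < \<epsilon>" and K: "K \<in> ?simplex ` T" "?p \<in> K"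
      "?p + \<epsilon> *\<^sub>R (?p - moment_pt w) \<in> K"
    by (rule push_away_within_member[OF p d fin_simplices closed])
  then obtain S where S: "S \<in> T" "?p \<in> ?simplex S" "?p + \<epsilon> *\<^sub>R (?p - moment_pt w) \<in> ?simplex S"
    by blast
  have "?p \<in> ?simplex S0"
    using moment_barycenter_in_hull[OF finite_subset[OF AS0 finS[OF S0]] ne] AS0
    unfolding gsimplex_def by (meson hull_mono image_mono subsetD)
  then have p_common: "?p \<in> convex hull (moment_pt ` (S \<inter> S0))"
    using S(2) inter S0 S(1) by (auto simp: gsimplex_def)
  have "A \<subseteq> S \<inter> S0"
    by (rule subset_if_moment_barycenter_in_hull[OF finS[OF S0] _ AS0 ne _ p_common]) (use T S0 in auto)
  then have "A \<subseteq> S" by blast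
  moreover have "w \<notin> S"
  proof
    assume "w \<in> S"
    then have "?p + \<epsilon> *\<^sub>R (?p - moment_pt w) \<notin> ?simplex S"
      unfolding gsimplex_def using T S(1) w(2) \<open>A \<subseteq> S\<close>
      by (intro pushed_moment_barycenter_notin_hull[OF finS[OF S(1)] _ _ _ ne eps]) auto
    then show False using S(3) by contradiction
  qed
  ultimately show ?thesis using S(1) by blast
qed

section \<open>Collapsing the doubled vertex\<close>

lemma finite_cyc_m: "finite (cyc_m m)"
  by (simp add: cyc_m_def)

lemma gap_in_cyc_m:
  assumes "a \<in> cyc_m m" "b \<in> cyc_m m" "s \<in> cyc_m m" "a < s" "s < b"
  shows "a + 2 \<le> b"
proof -
  obtain i j k where "a = real i" "b = real j" "s = real k"
    using assms(1-3) by (auto simp: cyc_m_def)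
  then have "i < k" "k < j" using assms(4,5) by simp_all
  then show ?thesis using \<open>a = real i\<close> \<open>b = real j\<close> by simp
qed

lemma Min_cyc_m: "1 \<le> m \<Longrightarrow> Min (cyc_m m) = 1"
  by (rule Min_eqI) (auto simp: cyc_m_def)

lemma Max_cyc_m: "1 \<le> m \<Longrightarrow> Max (cyc_m m) = real m"
  by (rule Max_eqI) (auto simp: cyc_m_def)

lemma separated_in_cyc_m_iff:
  assumes "B \<subseteq> {1..m}"
  shows "separated_in (cyc_m m) (real ` B) \<longleftrightarrow> (\<forall>a\<in>B. \<forall>b\<in>B. a < b \<longrightarrow> a + 2 \<le> b)"
proof
  assume sep: "separated_in (cyc_m m) (real ` B)"
  show "\<forall>a\<in>B. \<forall>b\<in>B. a < b \<longrightarrow> a + 2 \<le> b"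
  proof (intro ballI impI)
    fix a b assume "a \<in> B" "b \<in> B" "a < b"
    then obtain j where "real a < real j" "real j < real b"
      using sep by (force simp: separated_in_def cyc_m_def)
    then have "a < j" "j < b" by simp_all
    then show "a + 2 \<le> b" by linarith
  qed
next
  assume gap: "\<forall>a\<in>B. \<forall>b\<in>B. a < b \<longrightarrow> a + 2 \<le> b"
  show "separated_in (cyc_m m) (real ` B)"
    unfolding separated_in_def
  proof (intro ballI impI)
    fix a b assume "a \<in> real ` B" "b \<in> real ` B" "a < b"
    then obtain i j where ij: "i \<in> B" "j \<in> B" "a = real i" "b = real j" "i + 2 \<le> j"
      using gap by force
    then have "i + 1 \<in> {1..m}" using assms by auto
    then have "real (i + 1) \<in> cyc_m m" unfolding cyc_m_def by (rule imageI)
    with ij show "\<exists>s\<in>cyc_m m. a < s \<and> s < b" by (intro bexI[of _ "real (i + 1)"]) auto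
  qed
qed

lemma mem_nu_iff:
  assumes "2 \<le> m"
  shows "B \<in> nu m k \<longleftrightarrow> B \<subseteq> {1..m} \<and> card B = k + 1 \<and>
    separated_in (cyc_m m) (real ` B) \<and> \<not> (1 \<in> B \<and> m \<in> B)"
proof -
  have "(\<forall>a\<in>B. \<forall>b\<in>B. b \<le> a + m - 2) \<longleftrightarrow> \<not> (1 \<in> B \<and> m \<in> B)" if B: "B \<subseteq> {1..m}"
  proof
    assume ends: "\<not> (1 \<in> B \<and> m \<in> B)"
    show "\<forall>a\<in>B. \<forall>b\<in>B. b \<le> a + m - 2"
    proof (intro ballI)
      fix a b assume ab: "a \<in> B" "b \<in> B"
      then have "1 \<le> a" "b \<le> m" using B by auto
      moreover have "a = 1 \<longrightarrow> b \<noteq> m" using ends ab by auto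
      ultimately show "b \<le> a + m - 2" by linarith
    qed
  qed (use assms in force)
  then show ?thesis unfolding nu_def using separated_in_cyc_m_iff by blast
qed

lemma collapse_tri_simplices: "\<forall>S\<in>collapse_tri x y v m n T. S \<subseteq> cyc_m m \<and> card S = n + 1"
  by (auto simp: collapse_tri_def cyc_m_def)

locale doubled_vertex =
  fixes m v :: nat and x y :: real
  assumes v_ge: "2 \<le> v" and v_le: "v \<le> m - 1"
    and x_gt: "real v - 1 < x" and x_lt_y: "x < y" and y_lt: "y < real v + 1"
begin

definition collapse_pt :: "real \<Rightarrow> real" where
  "collapse_pt t = (if t \<in> {x, y} then real v else t)"

lemma collapse_eq_image: "collapse x y v S = collapse_pt ` S"
  by (auto simp: collapse_def collapse_pt_def image_iff)

lemma m_ge_3: "3 \<le> m"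
  using v_ge v_le by linarith

lemma mem_cyc_m_plus: "t \<in> cyc_m_plus m v x y \<longleftrightarrow> t = x \<or> t = y \<or> (\<exists>j\<in>{1..m}. j \<noteq> v \<and> t = real j)"
  by (auto simp: cyc_m_plus_def)

lemma nat_far_from_v: "j \<noteq> v \<Longrightarrow> real j + 1 \<le> real v \<or> real v + 1 \<le> real j"
  by linarith

lemma x_y_bounds: "1 < x" "y < real m"
  using v_ge v_le x_gt y_lt m_ge_3 by linarith+

lemma finite_cyc_m_plus: "finite (cyc_m_plus m v x y)"
  by (simp add: cyc_m_plus_def)

lemma cyc_m_plus_bounds: "t \<in> cyc_m_plus m v x y \<Longrightarrow> 1 \<le> t \<and> t \<le> real m"
  using x_y_bounds x_lt_y by (auto simp: mem_cyc_m_plus)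

lemma Min_cyc_m_plus: "Min (cyc_m_plus m v x y) = 1"
proof (rule Min_eqI[OF finite_cyc_m_plus])
  show "1 \<in> cyc_m_plus m v x y" using v_ge m_ge_3 by (auto simp: mem_cyc_m_plus intro: bexI[of _ 1])
qed (use cyc_m_plus_bounds in auto)

lemma Max_cyc_m_plus: "Max (cyc_m_plus m v x y) = real m"
proof (rule Max_eqI[OF finite_cyc_m_plus])
  show "real m \<in> cyc_m_plus m v x y" using v_le m_ge_3 by (auto simp: mem_cyc_m_plus)
qed (use cyc_m_plus_bounds in auto)

lemma x_y_adjacent: "t \<in> cyc_m_plus m v x y \<Longrightarrow> t \<le> x \<or> y \<le> t"
  using nat_far_from_v x_gt y_lt x_lt_y by (fastforce simp: mem_cyc_m_plus)

lemma collapse_pt_in_cyc_m: "t \<in> cyc_m_plus m v x y \<Longrightarrow> collapse_pt t \<in> cyc_m m"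
  using v_ge v_le by (auto simp: mem_cyc_m_plus collapse_pt_def cyc_m_def)

lemma collapse_pt_mono:
  assumes "a \<in> cyc_m_plus m v x y" "b \<in> cyc_m_plus m v x y" "a \<le> b"
  shows "collapse_pt a \<le> collapse_pt b"
  using assms nat_far_from_v x_gt y_lt x_lt_y
  by (auto simp: mem_cyc_m_plus collapse_pt_def)

lemma collapse_pt_eq_end_iff:
  assumes "t \<in> cyc_m_plus m v x y"
  shows "collapse_pt t = 1 \<longleftrightarrow> t = 1" and "collapse_pt t = real m \<longleftrightarrow> t = real m"
  using assms x_y_bounds x_lt_y v_ge v_le m_ge_3 by (auto simp: mem_cyc_m_plus collapse_pt_def)

lemma inj_on_collapse_pt:
  assumes "S \<subseteq> cyc_m_plus m v x y" and "\<not> {x, y} \<subseteq> S"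
  shows "inj_on collapse_pt S"
proof (rule inj_onI)
  fix a b assume ab: "a \<in> S" "b \<in> S" "collapse_pt a = collapse_pt b"
  have "real j \<noteq> real v" if "j \<noteq> v" for j using that by simp
  then show "a = b" using assms ab by (auto simp: mem_cyc_m_plus collapse_pt_def subset_iff split: if_splits)
qed

lemma exists_between_if_collapse_gap:
  assumes a: "a \<in> cyc_m_plus m v x y" and b: "b \<in> cyc_m_plus m v x y"
    and gap: "collapse_pt a + 2 \<le> collapse_pt b"
  shows "\<exists>s\<in>cyc_m_plus m v x y. a < s \<and> s < b"
proof -
  obtain i j where ij: "i \<in> {1..m}" "j \<in> {1..m}" "collapse_pt a = real i" "collapse_pt b = real j"
    using collapse_pt_in_cyc_m[OF a] collapse_pt_in_cyc_m[OF b] by (auto simp: cyc_m_def)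
  have a_lt: "a < real i + 1" and b_gt: "real j - 1 < b"
    using a b ij(3,4) x_gt y_lt x_lt_y by (auto simp: mem_cyc_m_plus collapse_pt_def split: if_splits)
  show ?thesis
  proof (cases "i + 1 = v")
    case True
    then have "a = real i" "b = real j"
      using a b ij(3,4) gap by (auto simp: mem_cyc_m_plus collapse_pt_def split: if_splits)
    moreover have "x \<in> cyc_m_plus m v x y" by (simp add: mem_cyc_m_plus)
    ultimately show ?thesis using True gap ij(3,4) x_gt x_lt_y y_lt by (intro bexI[of _ x]) auto
  next
    case False
    have "i + 1 \<in> {1..m}" using ij gap by auto
    then show ?thesis
      using False a_lt b_gt gap ij by (intro bexI[of _ "real (i + 1)"]) (auto simp: mem_cyc_m_plus)
  qed
qed

lemma gale_interior_lift:
  assumes AhV: "Ah \<subseteq> cyc_m_plus m v x y" and inj: "inj_on collapse_pt Ah"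
    and gale: "gale_interior n (cyc_m m) (collapse_pt ` Ah)"
  shows "gale_interior n (cyc_m_plus m v x y) Ah"
proof -
  have "separated_in (cyc_m_plus m v x y) Ah"
    unfolding separated_in_def
  proof (intro ballI impI)
    fix a b assume ab: "a \<in> Ah" "b \<in> Ah" "a < b"
    then have "collapse_pt a \<le> collapse_pt b" "collapse_pt a \<noteq> collapse_pt b"
      using collapse_pt_mono[of a b] AhV inj_on_eq_iff[OF inj ab(1,2)] by auto
    then obtain s where "s \<in> cyc_m m" "collapse_pt a < s" "s < collapse_pt b"
      using gale ab by (force simp: gale_interior_def separated_in_def)
    then have "collapse_pt a + 2 \<le> collapse_pt b"
      using gap_in_cyc_m collapse_pt_in_cyc_m ab AhV by blast
    then show "\<exists>s\<in>cyc_m_plus m v x y. a < s \<and> s < b"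
      using exists_between_if_collapse_gap ab AhV by blast
  qed
  moreover have "1 \<in> collapse_pt ` Ah \<longleftrightarrow> 1 \<in> Ah" "real m \<in> collapse_pt ` Ah \<longleftrightarrow> real m \<in> Ah"
    using collapse_pt_eq_end_iff AhV by (force simp: image_iff)+
  ultimately show ?thesis
    using gale m_ge_3 by (simp add: gale_interior_def Min_cyc_m_plus Max_cyc_m_plus Min_cyc_m Max_cyc_m)
qed

lemma gale_interior_collapse:
  assumes AhV: "Ah \<subseteq> cyc_m_plus m v x y" and gale: "gale_interior n (cyc_m_plus m v x y) Ah"
    and B: "B \<in> nu m k" and AB: "collapse_pt ` Ah = real ` B"
  shows "gale_interior n (cyc_m m) (real ` B)"
proof -
  have "separated_in (cyc_m m) (real ` B)" "\<not> (1 \<in> B \<and> m \<in> B)"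
    using B m_ge_3 by (simp_all add: mem_nu_iff)
  moreover have "1 \<in> real ` B \<longleftrightarrow> 1 \<in> Ah" "real m \<in> real ` B \<longleftrightarrow> real m \<in> Ah"
    using collapse_pt_eq_end_iff AhV by (force simp flip: AB simp: image_iff)+
  ultimately show ?thesis
    using gale m_ge_3 by (auto simp: gale_interior_def Min_cyc_m_plus Max_cyc_m_plus Min_cyc_m Max_cyc_m image_iff)
qed

lemma simp_set_collapse_tri_subset:
  fixes That :: "real set set"
  assumes tri: "is_triangulation TYPE('n::finite) (cyc_m_plus m v x y) That"
    and A: "A \<in> simp_set TYPE('n) (cyc_m m) (collapse_tri x y v m CARD('n) That)"
  shows "A \<in> (\<lambda>B. real ` B) ` nu m (CARD('n) div 2)"
    and "\<exists>Ah \<in> simp_set TYPE('n) (cyc_m_plus m v x y) That. A = collapse x y v Ah"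
proof -
  have T: "\<forall>S\<in>That. S \<subseteq> cyc_m_plus m v x y \<and> card S = CARD('n) + 1"
    using tri by (simp add: is_triangulation_def)
  note cT = collapse_tri_simplices[of x y v m "CARD('n)" That]
  obtain S where S: "S \<in> collapse_tri x y v m CARD('n) That" "A \<subseteq> S"
    and cardA: "card A = CARD('n) div 2 + 1" and gale: "gale_interior CARD('n) (cyc_m m) A"
    using A mem_simp_set_iff[OF finite_cyc_m cT] by blast
  obtain Sh where Sh: "Sh \<in> That" "S = collapse_pt ` Sh"
    using S(1) by (auto simp: collapse_tri_def collapse_eq_image)
  obtain Ah where Ah: "Ah \<subseteq> Sh" "inj_on collapse_pt Ah" "A = collapse_pt ` Ah"
    using S(2) Sh(2) subset_image_inj by metis
  have AhV: "Ah \<subseteq> cyc_m_plus m v x y" using Ah(1) T Sh(1) by blast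
  have "Ah \<in> simp_set TYPE('n) (cyc_m_plus m v x y) That"
    unfolding mem_simp_set_iff[OF finite_cyc_m_plus T]
    using Ah Sh(1) cardA gale gale_interior_lift[OF AhV Ah(2)] by (auto simp: card_image)
  then show "\<exists>Ah \<in> simp_set TYPE('n) (cyc_m_plus m v x y) That. A = collapse x y v Ah"
    using Ah(3) by (auto simp: collapse_eq_image)
  define B where "B = {j \<in> {1..m}. real j \<in> A}"
  have "A \<subseteq> cyc_m m" using S cT by blast
  then have AB: "A = real ` B" by (force simp: B_def cyc_m_def)
  have "B \<subseteq> {1..m}" by (auto simp: B_def)
  moreover have "card B = CARD('n) div 2 + 1" using cardA by (simp add: AB card_image)
  moreover have "separated_in (cyc_m m) (real ` B)" using gale by (simp add: AB gale_interior_def)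
  moreover have "\<not> (1 \<in> B \<and> m \<in> B)"
    using gale m_ge_3 by (auto simp: AB gale_interior_def Min_cyc_m Max_cyc_m)
  ultimately have "B \<in> nu m (CARD('n) div 2)" using m_ge_3 by (simp add: mem_nu_iff)
  then show "A \<in> (\<lambda>B. real ` B) ` nu m (CARD('n) div 2)" using AB by blast
qed

lemma simplex_without_x_or_y:
  fixes That :: "real set set"
  assumes tri: "is_triangulation TYPE('n::finite) (cyc_m_plus m v x y) That"
    and Ah: "Ah \<in> simp_set TYPE('n) (cyc_m_plus m v x y) That"
  obtains Sh where "Sh \<in> That" "Ah \<subseteq> Sh" "\<not> {x, y} \<subseteq> Sh"
proof -
  have T: "\<forall>S\<in>That. S \<subseteq> cyc_m_plus m v x y \<and> card S = CARD('n) + 1"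
    using tri by (simp add: is_triangulation_def)
  obtain Sh0 where Sh0: "Sh0 \<in> That" "Ah \<subseteq> Sh0" and cardAh: "card Ah = CARD('n) div 2 + 1"
    and gale: "gale_interior CARD('n) (cyc_m_plus m v x y) Ah"
    using Ah mem_simp_set_iff[OF finite_cyc_m_plus T] by blast
  have nf: "\<not> (\<exists>F. F facet_of cyclic_polytope TYPE('n) (cyc_m_plus m v x y)
      \<and> (moment_pt ` Ah :: (real^'n) set) \<subseteq> F)"
    using Ah by (simp add: simp_set_def)
  have "\<not> {x, y} \<subseteq> Ah"
    using gale x_lt_y x_y_adjacent by (force simp: gale_interior_def separated_in_def)
  then obtain w where w: "w \<in> {x, y}" "w \<notin> Ah" by blast
  then have "w \<in> cyc_m_plus m v x y" by (auto simp: mem_cyc_m_plus)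
  moreover have "Ah \<noteq> {}" using cardAh by auto
  ultimately obtain S where "S \<in> That" "Ah \<subseteq> S" "w \<notin> S"
    using triangulation_avoids_vertex[OF tri Sh0 _ nf] w(2) by blast
  then show ?thesis using that w(1) by blast
qed

lemma simp_set_collapse_tri_supset:
  fixes That :: "real set set"
  assumes tri: "is_triangulation TYPE('n::finite) (cyc_m_plus m v x y) That"
    and B: "B \<in> nu m (CARD('n) div 2)"
    and Ah: "Ah \<in> simp_set TYPE('n) (cyc_m_plus m v x y) That" and AB: "real ` B = collapse x y v Ah"
  shows "real ` B \<in> simp_set TYPE('n) (cyc_m m) (collapse_tri x y v m CARD('n) That)"
proof -
  have T: "\<forall>S\<in>That. S \<subseteq> cyc_m_plus m v x y \<and> card S = CARD('n) + 1"
    using tri by (simp add: is_triangulation_def)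
  note cT = collapse_tri_simplices[of x y v m "CARD('n)" That]
  have gale: "gale_interior CARD('n) (cyc_m_plus m v x y) Ah" and AhV: "Ah \<subseteq> cyc_m_plus m v x y"
    using Ah mem_simp_set_iff[OF finite_cyc_m_plus T] T by blast+
  obtain Sh where Sh: "Sh \<in> That" "Ah \<subseteq> Sh" "\<not> {x, y} \<subseteq> Sh"
    using simplex_without_x_or_y[OF tri Ah] by blast
  have ShV: "Sh \<subseteq> cyc_m_plus m v x y" and cardSh: "card Sh = CARD('n) + 1" using Sh(1) T by auto
  have "collapse_pt ` Sh \<in> collapse_tri x y v m CARD('n) That"
    using Sh(1) collapse_pt_in_cyc_m ShV cardSh card_image[OF inj_on_collapse_pt[OF ShV Sh(3)]]
    by (auto simp: collapse_tri_def collapse_eq_image cyc_m_def)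
  moreover have "real ` B \<subseteq> collapse_pt ` Sh" using AB Sh(2) by (auto simp: collapse_eq_image)
  moreover have "card (real ` B) = CARD('n) div 2 + 1"
    using B m_ge_3 by (simp add: mem_nu_iff card_image)
  moreover have "gale_interior CARD('n) (cyc_m m) (real ` B)"
    using gale_interior_collapse[OF AhV gale B] AB by (simp add: collapse_eq_image)
  ultimately show ?thesis
    unfolding mem_simp_set_iff[OF finite_cyc_m cT] by blast
qed

end

theorem lemma4p25:
  fixes m v :: nat and x y :: real and That :: "real set set"
  assumes "2 \<le> v" and "v \<le> m - 1"
    and "real v - 1 < x" and "x < y" and "y < real v + 1"
    and "is_triangulation TYPE('n::finite) (cyc_m_plus m v x y) That"
  shows "simp_set TYPE('n) (cyc_m m) (collapse_tri x y v m CARD('n) That) =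
         {A. A \<in> (\<lambda>B. real ` B) ` nu m (CARD('n) div 2) \<and>
             (\<exists>Ahat \<in> simp_set TYPE('n) (cyc_m_plus m v x y) That. A = collapse x y v Ahat)}"
proof -
  interpret doubled_vertex m v x y using assms(1-5) by unfold_locales
  show ?thesis
  proof (intro set_eqI iffI)
    fix A assume "A \<in> simp_set TYPE('n) (cyc_m m) (collapse_tri x y v m CARD('n) That)"
    then show "A \<in> {A. A \<in> (\<lambda>B. real ` B) ` nu m (CARD('n) div 2) \<and>
        (\<exists>Ahat \<in> simp_set TYPE('n) (cyc_m_plus m v x y) That. A = collapse x y v Ahat)}"
      using simp_set_collapse_tri_subset[OF assms(6)] by simp
  next
    fix A assume "A \<in> {A. A \<in> (\<lambda>B. real ` B) ` nu m (CARD('n) div 2) \<and>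
        (\<exists>Ahat \<in> simp_set TYPE('n) (cyc_m_plus m v x y) That. A = collapse x y v Ahat)}"
    then obtain B Ah where B: "B \<in> nu m (CARD('n) div 2)" "A = real ` B"
      and Ah: "Ah \<in> simp_set TYPE('n) (cyc_m_plus m v x y) That" "A = collapse x y v Ah"
      by blast
    then show "A \<in> simp_set TYPE('n) (cyc_m m) (collapse_tri x y v m CARD('n) That)"
      using simp_set_collapse_tri_supset[OF assms(6) B(1) Ah(1)] by simp
  qed
qed

end
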